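(* Let $k\ge1$ be an integer, assume condition $(\ast)$, and let $\alpha_k=\frac{2k+1}{kb}$. Define $$J(t)=\int_{[0,b]^k}\prod_{i=1}^k g(x_i)\,dx_1\cdots dx_k\int_{\alpha_k\log t\le s_1\le s_2\le\cdots\le s_k\le t}V_0u_1\cdots u_k\,e^{\lambda_0t}\prod_{j=1}^k e^{x_j(t-s_j)}\,ds_1\cdots ds_k,$$ the contribution to $EZ_k(t)$ from first mutation times $s_1\ge\alpha_k\log t$. Then $J(t)=o\!\left(t^{-2k}e^{(\lambda_0+kb)t}\right)$ as $t\to\infty$.
   Context: Here $\lambda_0>0$, $V_0>0$, $u_1,\dots,u_k>0$ are constants, and $g$ is a probability density on $[0,\infty)$. $EZ_k(t)$ (the mean number of type-$k$ cells in the model where $Z_0(t)=V_0e^{\lambda_0t}$ and type-$(j+1)$ cells arise from type-$j$ cells at rate $u_{j+1}$ with birth rate increased by an independent increment of density $g$) equals the same integral with the $s$-region replaced by $0\le s_1\le\cdots\le s_k\le t$. Condition $(\ast)$: for some $b>0$, $g$ vanishes outside $[0,b]$, $g$ is continuous at $b$, $g(b)>0$, and $g\le G$ on $[0,b]$ for some constant $G<\infty$. $f(t)=o(h(t))$ means $f(t)/h(t)\to0$. *)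

theory Defs
  imports "HOL-Analysis.Analysis" "HOL-Library.Landau_Symbols"
begin

text \<open>Vectors (x_1,...,x_k) and (s_1,...,s_k) are functions on the index set {1..k},
  integrated w.r.t. the k-fold product of Lebesgue measure.\<close>

definition s_region :: "nat \<Rightarrow> real \<Rightarrow> real \<Rightarrow> (nat \<Rightarrow> real) set" where
  "s_region k a t = {s \<in> {1..k} \<rightarrow>\<^sub>E UNIV.
      (\<forall>i\<in>{1..k}. a \<le> s i \<and> s i \<le> t) \<and>
      (\<forall>i\<in>{1..k}. \<forall>j\<in>{1..k}. i \<le> j \<longrightarrow> s i \<le> s j)}"

definition J_contrib ::
  "nat \<Rightarrow> real \<Rightarrow> (real \<Rightarrow> real) \<Rightarrow> real \<Rightarrow> (nat \<Rightarrow> real) \<Rightarrow> real \<Rightarrow> real \<Rightarrow> real \<Rightarrow> real" where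
  "J_contrib k b g V0 u lam0 alpha t =
     (LINT x : ({1..k} \<rightarrow>\<^sub>E {0..b}) | PiM {1..k} (\<lambda>_. lborel).
        (\<Prod>i\<in>{1..k}. g (x i)) *
        (LINT s : s_region k (alpha * ln t) t | PiM {1..k} (\<lambda>_. lborel).
           V0 * (\<Prod>i\<in>{1..k}. u i) * exp (lam0 * t) *
           (\<Prod>j\<in>{1..k}. exp (x j * (t - s j)))))"

end

theory Submission imports Defs "HOL-Real_Asymp.Real_Asymp" begin

text \<open>Bound g by G, each x_j by b, and enlarge the ordered s-region to the box [a, t]^k with
  a = \<alpha>_k log t; the s-integral then factorises, giving
  J(t) \<le> C e^{\<lambda>_0 t} e^{kb(t - a)} = C t^{-(2k+1)} e^{(\<lambda>_0 + kb) t}.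
  The choice of \<alpha>_k leaves exactly one surplus factor 1/t.\<close>

lemma nn_integral_exp_decay_interval:
  fixes a t c :: real
  assumes "a \<le> t" "c > 0"
  shows "(\<integral>\<^sup>+y. ennreal (indicator {a..t} y * exp (c * (t - y))) \<partial>lborel)
           = ennreal ((exp (c * (t - a)) - 1) / c)"
proof -
  have "((\<lambda>y. exp (c * (t - y))) has_integral (- exp (c * (t - t)) / c - - exp (c * (t - a)) / c)) {a..t}"
  proof (rule fundamental_theorem_of_calculus[OF assms(1)])
    fix y assume "y \<in> {a..t}"
    show "((\<lambda>y. - exp (c * (t - y)) / c) has_vector_derivative exp (c * (t - y))) (at y within {a..t})"
      unfolding has_real_derivative_iff_has_vector_derivative[symmetric]
      using assms by (auto intro!: derivative_eq_intros)
  qed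
  then have "((\<lambda>y. exp (c * (t - y))) has_integral ((exp (c * (t - a)) - 1) / c)) {a..t}"
    by (simp add: diff_divide_distrib)
  from nn_integral_has_integral_lebesgue[OF _ this] show ?thesis by simp
qed

lemma set_integral_le_by_nn_integral:
  fixes f :: "'a \<Rightarrow> real" and h :: "'a \<Rightarrow> ennreal"
  assumes "0 \<le> r" "\<And>x. x \<in> A \<Longrightarrow> ennreal (f x) \<le> h x" "(\<integral>\<^sup>+x\<in>A. h x \<partial>M) \<le> ennreal r"
  shows "(LINT x : A | M. f x) \<le> r"
  unfolding set_lebesgue_integral_def
proof (rule integral_real_bounded[OF assms(1)])
  have "(\<integral>\<^sup>+x. ennreal (indicator A x *\<^sub>R f x) \<partial>M) \<le> (\<integral>\<^sup>+x\<in>A. h x \<partial>M)"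
    by (rule nn_integral_mono) (auto simp: assms(2) indicator_def)
  then show "(\<integral>\<^sup>+x. ennreal (indicator A x *\<^sub>R f x) \<partial>M) \<le> ennreal r"
    using assms(3) by (rule order_trans)
qed

lemma s_region_integral_le:
  fixes a t c K :: real and k :: nat and x :: "nat \<Rightarrow> real"
  assumes "a \<le> t" "c > 0" "K \<ge> 0" "x \<in> {1..k} \<rightarrow>\<^sub>E {0..c}"
  shows "(LINT s : s_region k a t | PiM {1..k} (\<lambda>_. lborel). K * (\<Prod>j\<in>{1..k}. exp (x j * (t - s j))))
           \<le> K * ((exp (c * (t - a)) - 1) / c) ^ k"
proof -
  interpret product_sigma_finite "\<lambda>_. lborel" by standard
  define f where "f = (\<lambda>y. ennreal (indicator {a..t} y * exp (c * (t - y))))"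
  have f_measurable: "f \<in> borel_measurable borel"
    unfolding f_def by measurable
  have f_integral: "integral\<^sup>N lborel f = ennreal ((exp (c * (t - a)) - 1) / c)"
    unfolding f_def by (rule nn_integral_exp_decay_interval[OF assms(1,2)])
  have "exp (c * (t - a)) \<ge> 1" using assms by simp
  then have q_nonneg: "0 \<le> (exp (c * (t - a)) - 1) / c" using assms by simp
  then have nonneg: "0 \<le> K * ((exp (c * (t - a)) - 1) / c) ^ k" using assms by simp
  have pointwise: "ennreal (K * (\<Prod>j\<in>{1..k}. exp (x j * (t - s j)))) \<le> ennreal K * (\<Prod>j\<in>{1..k}. f (s j))"
    if "s \<in> s_region k a t" for s
  proof -
    have "(\<Prod>j\<in>{1..k}. exp (x j * (t - s j))) \<le> (\<Prod>j\<in>{1..k}. indicator {a..t} (s j) * exp (c * (t - s j)))"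
      using that assms(4) by (intro prod_mono) (auto simp: s_region_def intro!: mult_right_mono)
    then have "ennreal (K * (\<Prod>j\<in>{1..k}. exp (x j * (t - s j))))
        \<le> ennreal (K * (\<Prod>j\<in>{1..k}. indicator {a..t} (s j) * exp (c * (t - s j))))"
      using assms(3) by (intro ennreal_leI mult_left_mono)
    also have "\<dots> = ennreal K * ennreal (\<Prod>j\<in>{1..k}. indicator {a..t} (s j) * exp (c * (t - s j)))"
      using assms(3) by (intro ennreal_mult prod_nonneg) auto
    also have "\<dots> = ennreal K * (\<Prod>j\<in>{1..k}. f (s j))"
      unfolding f_def by (subst prod_ennreal) auto
    finally show ?thesis .
  qed
  have "(\<integral>\<^sup>+s\<in>s_region k a t. ennreal K * (\<Prod>j\<in>{1..k}. f (s j)) \<partial>PiM {1..k} (\<lambda>_. lborel))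
      \<le> (\<integral>\<^sup>+s. ennreal K * (\<Prod>j\<in>{1..k}. f (s j)) \<partial>PiM {1..k} (\<lambda>_. lborel))"
    by (intro nn_integral_mono) (simp add: indicator_def)
  also have "\<dots> = ennreal K * (\<integral>\<^sup>+s. (\<Prod>j\<in>{1..k}. f (s j)) \<partial>PiM {1..k} (\<lambda>_. lborel))"
    unfolding f_def by (rule nn_integral_cmult) measurable
  also have "\<dots> = ennreal K * (\<Prod>j\<in>{1..k}. integral\<^sup>N lborel f)"
    using f_measurable by (subst product_nn_integral_prod) auto
  also have "\<dots> = ennreal (K * ((exp (c * (t - a)) - 1) / c) ^ k)"
    using assms(3) q_nonneg by (simp add: f_integral ennreal_power ennreal_mult)
  finally show ?thesis
    using nonneg pointwise by (intro set_integral_le_by_nn_integral) auto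
qed

lemma J_contrib_nonneg:
  assumes "0 \<le> V0" "\<And>i. i \<in> {1..k} \<Longrightarrow> 0 \<le> u i" "\<And>x. 0 \<le> g x"
  shows "0 \<le> J_contrib k b g V0 u lam0 \<alpha> t"
  unfolding J_contrib_def set_lebesgue_integral_def
  using assms by (auto intro!: integral_nonneg_AE AE_I2 mult_nonneg_nonneg prod_nonneg)

lemma J_contrib_le:
  assumes "b > 0" "0 \<le> V0" "\<And>i. i \<in> {1..k} \<Longrightarrow> 0 \<le> u i"
    and "\<And>x. 0 \<le> g x" "\<And>x. x \<in> {0..b} \<Longrightarrow> g x \<le> G" and "\<alpha> * ln t \<le> t"
  shows "J_contrib k b g V0 u lam0 \<alpha> t
           \<le> G ^ k * V0 * (\<Prod>i\<in>{1..k}. u i) * exp (lam0 * t) * exp (b * (t - \<alpha> * ln t)) ^ k"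
proof -
  interpret product_sigma_finite "\<lambda>_. lborel" by standard
  define a where "a = \<alpha> * ln t"
  define K where "K = V0 * (\<Prod>i\<in>{1..k}. u i) * exp (lam0 * t)"
  define r where "r = K * ((exp (b * (t - a)) - 1) / b) ^ k"
  let ?A = "{1..k} \<rightarrow>\<^sub>E {0..b}"
  have G_nonneg: "0 \<le> G" using assms(1) assms(4,5)[of b] by fastforce
  have K_nonneg: "0 \<le> K"
    unfolding K_def using assms(2,3) by (auto intro!: mult_nonneg_nonneg prod_nonneg)
  have exp_ge_1: "1 \<le> exp (b * (t - a))" using assms(1,6) by (simp add: a_def)
  then have r_nonneg: "0 \<le> r" using assms(1) K_nonneg by (simp add: r_def)
  have integrand_le: "ennreal ((\<Prod>i\<in>{1..k}. g (x i)) *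
      (LINT s : s_region k a t | PiM {1..k} (\<lambda>_. lborel). K * (\<Prod>j\<in>{1..k}. exp (x j * (t - s j)))))
      \<le> ennreal (G ^ k * r)" if x: "x \<in> ?A" for x
  proof (rule ennreal_leI, rule mult_mono)
    have "(\<Prod>i\<in>{1..k}. g (x i)) \<le> (\<Prod>i\<in>{1..k}. G)"
      using x assms(4,5) by (intro prod_mono) (auto simp: PiE_iff)
    then show "(\<Prod>i\<in>{1..k}. g (x i)) \<le> G ^ k" by simp
    show "(LINT s : s_region k a t | PiM {1..k} (\<lambda>_. lborel). K * (\<Prod>j\<in>{1..k}. exp (x j * (t - s j)))) \<le> r"
      unfolding r_def using s_region_integral_le[OF _ assms(1) K_nonneg x] assms(6) by (simp add: a_def)
  qed (use G_nonneg K_nonneg in \<open>auto simp: set_lebesgue_integral_def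
                                     intro!: integral_nonneg_AE mult_nonneg_nonneg prod_nonneg\<close>)
  have "(\<integral>\<^sup>+x\<in>?A. ennreal (G ^ k * r) \<partial>PiM {1..k} (\<lambda>_. lborel))
      = ennreal (G ^ k * r) * (\<Prod>i\<in>{1..k}. emeasure lborel {0..b})"
    by (subst nn_integral_cmult_indicator) (auto simp: emeasure_PiM)
  also have "\<dots> = ennreal (G ^ k * r * b ^ k)"
    using assms(1) G_nonneg r_nonneg by (simp add: prod_ennreal ennreal_mult ennreal_power)
  finally have "J_contrib k b g V0 u lam0 \<alpha> t \<le> G ^ k * r * b ^ k"
    unfolding J_contrib_def a_def[symmetric] K_def[symmetric]
    using G_nonneg r_nonneg assms(1) integrand_le
    by (intro set_integral_le_by_nn_integral[where h = "\<lambda>_. ennreal (G ^ k * r)"]) auto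
  also have "\<dots> = G ^ k * K * (exp (b * (t - a)) - 1) ^ k"
    using assms(1) by (simp add: r_def power_divide)
  also have "\<dots> \<le> G ^ k * K * exp (b * (t - a)) ^ k"
    using G_nonneg K_nonneg exp_ge_1 by (intro mult_left_mono power_mono) auto
  finally show ?thesis by (simp add: K_def a_def)
qed

lemma J_contrib_bigo:
  assumes "\<alpha> > 0" "b > 0" "0 \<le> V0" "\<And>i. i \<in> {1..k} \<Longrightarrow> 0 \<le> u i"
    and "\<And>x. 0 \<le> g x" "\<And>x. x \<in> {0..b} \<Longrightarrow> g x \<le> G"
  shows "(\<lambda>t. J_contrib k b g V0 u lam0 \<alpha> t)
           \<in> O[at_top](\<lambda>t. exp (lam0 * t) * exp (b * (t - \<alpha> * ln t)) ^ k)"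
proof (rule bigoI)
  have "eventually (\<lambda>t. \<alpha> * ln t \<le> t) at_top"
    using assms(1) by real_asymp
  then show "eventually (\<lambda>t. norm (J_contrib k b g V0 u lam0 \<alpha> t)
      \<le> G ^ k * V0 * (\<Prod>i\<in>{1..k}. u i) * norm (exp (lam0 * t) * exp (b * (t - \<alpha> * ln t)) ^ k)) at_top"
  proof eventually_elim
    case (elim t)
    then show ?case
      using J_contrib_le[OF assms(2-6) elim] J_contrib_nonneg[OF assms(3-5)] by (simp add: mult_ac)
  qed
qed

lemma exp_growth_delayed_by_log:
  fixes b c t lam :: real
  assumes "t > 0"
  shows "exp (lam * t) * exp (b * (t - c * ln t)) ^ k
           = t powr (- (real k * b * c)) * exp ((lam + real k * b) * t)"
proof -
  have "exp (lam * t) * exp (b * (t - c * ln t)) ^ k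
      = exp (- (real k * b * c) * ln t) * exp ((lam + real k * b) * t)"
    by (simp add: exp_of_nat_mult[symmetric] exp_add[symmetric] algebra_simps)
  then show ?thesis
    using assms by (simp add: powr_def)
qed

lemma powr_minus_one_mult_smallo:
  fixes f :: "real \<Rightarrow> real"
  shows "(\<lambda>t. t powr (p - 1) * f t) \<in> o[at_top](\<lambda>t. t powr p * f t)"
proof -
  have "(\<lambda>t::real. t powr (-1)) \<in> o[at_top](\<lambda>_. 1)"
    by real_asymp
  from landau_o.small_big_mult[OF this landau_o.big_refl[of "\<lambda>t. t powr p * f t"]]
  have "(\<lambda>t. t powr (-1) * (t powr p * f t)) \<in> o[at_top](\<lambda>t. t powr p * f t)"
    by (simp only: mult_1_left)
  moreover have "t powr (p - 1) = t powr (-1) * t powr p" for t :: real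
    by (subst powr_add[symmetric]) simp
  ultimately show ?thesis
    by (simp only: mult.assoc)
qed

theorem lemma4:
  fixes k :: nat and b G V0 lam0 :: real and u :: "nat \<Rightarrow> real" and g :: "real \<Rightarrow> real"
  assumes "k \<ge> 1"
    and "lam0 > 0" and "V0 > 0" and "\<forall>i\<in>{1..k}. u i > 0"
    and "g \<in> borel_measurable lborel" and "\<forall>x. g x \<ge> 0" and "\<forall>x<0. g x = 0"
    and "integrable lborel g" and "integral\<^sup>L lborel g = 1"
    and "b > 0" and "\<forall>x. x \<notin> {0..b} \<longrightarrow> g x = 0"
    and "continuous (at b within {0..b}) g" and "g b > 0"
    and "\<forall>x\<in>{0..b}. g x \<le> G"
  shows "(\<lambda>t. J_contrib k b g V0 u lam0 ((2 * real k + 1) / (real k * b)) t)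
           \<in> o[at_top](\<lambda>t. t powr (- 2 * real k) * exp ((lam0 + real k * b) * t))"
proof -
  define \<alpha> where "\<alpha> = (2 * real k + 1) / (real k * b)"
  have \<alpha>_pos: "\<alpha> > 0" and exponent_eq: "- (real k * b * \<alpha>) = - 2 * real k - 1"
    using assms(1,10) by (simp_all add: \<alpha>_def)
  have "(\<lambda>t. J_contrib k b g V0 u lam0 \<alpha> t)
      \<in> O[at_top](\<lambda>t. exp (lam0 * t) * exp (b * (t - \<alpha> * ln t)) ^ k)"
    using assms(3,4,6,14) by (intro J_contrib_bigo[OF \<alpha>_pos assms(10)]) (auto simp: less_imp_le)
  also have "(\<lambda>t. exp (lam0 * t) * exp (b * (t - \<alpha> * ln t)) ^ k)
      \<in> \<Theta>[at_top](\<lambda>t. t powr (- 2 * real k - 1) * exp ((lam0 + real k * b) * t))"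
    using eventually_gt_at_top[of 0]
    by (intro bigthetaI_cong) (auto elim!: eventually_mono simp only: exp_growth_delayed_by_log exponent_eq)
  also have "(\<lambda>t. t powr (- 2 * real k - 1) * exp ((lam0 + real k * b) * t))
      \<in> o[at_top](\<lambda>t. t powr (- 2 * real k) * exp ((lam0 + real k * b) * t))"
    by (rule powr_minus_one_mult_smallo)
  finally show ?thesis
    unfolding \<alpha>_def .
qed

end
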